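(* Let $\mathcal G=(V,E,r)$ be a graph. The monoid of agglomerations $\mathbf A(\mathcal G)$ is a finitely generated reduced Krull monoid, and its divisor theory has $3|E|+\iota$ prime divisors, where $\iota$ is the number of isolated vertices of $\mathcal G$.
   Context: A graph $\mathcal G=(V,E,r)$ consists of a finite vertex set $V$, a finite edge set $E$ disjoint from $V$, and a map $r$ assigning to each edge a two-element subset of $V$; multiple edges allowed, no loops. An isolated vertex is one incident with no edge. An agglomeration on $\mathcal G$ is a function $a\colon V\cup E\to\mathbb N_0$ with $a(v)\ge a(e)$ whenever $v$ is incident with $e$; $\mathbf A(\mathcal G)$ is the monoid of agglomerations under pointwise addition. A monoid homomorphism $\varphi\colon H\to D$ is a divisor homomorphism if $\varphi(a)$ being a summand of $\varphi(b)$ in $D$ implies $a$ is a summand of $b$ in $H$. A cancellative monoid is Krull if it has a divisor homomorphism into a free monoid $\mathbb N_0^{(I)}$. A divisor theory is a divisor homomorphism $\varphi\colon H\to\mathbb N_0^{(I)}$ such that every standard basis vector $\vec e_i$ equals the pointwise minimum of finitely many $\varphi(a_1),\dots,\varphi(a_k)$ with $a_j\in H$; divisor theories are unique up to isomorphism, and the number of prime divisors is the cardinality of $I$. *)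

theory Defs
  imports Main "HOL-Library.Function_Algebras"
begin

text \<open>A graph (V,E,r): V and E are finite, disjointness of V and E is encoded by
  using the sum type 'v + 'e for V \<union> E; r assigns to each edge a 2-element subset of V.\<close>

definition is_graph :: "'v set \<Rightarrow> 'e set \<Rightarrow> ('e \<Rightarrow> 'v set) \<Rightarrow> bool" where
  "is_graph V E r \<longleftrightarrow> finite V \<and> finite E \<and> (\<forall>e\<in>E. r e \<subseteq> V \<and> card (r e) = 2)"

definition isolated_vertices :: "'v set \<Rightarrow> 'e set \<Rightarrow> ('e \<Rightarrow> 'v set) \<Rightarrow> 'v set" where
  "isolated_vertices V E r = {v \<in> V. \<forall>e\<in>E. v \<notin> r e}"

text \<open>Agglomerations: functions V \<union> E \<rightarrow> N_0 (represented as functions on the sum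
  type that vanish outside V \<union> E) with a(v) \<ge> a(e) whenever v is incident with e.\<close>

definition agglomerations :: "'v set \<Rightarrow> 'e set \<Rightarrow> ('e \<Rightarrow> 'v set) \<Rightarrow> ('v + 'e \<Rightarrow> nat) set" where
  "agglomerations V E r =
     {a. (\<forall>x. x \<notin> Inl ` V \<union> Inr ` E \<longrightarrow> a x = 0) \<and>
         (\<forall>e\<in>E. \<forall>v\<in>r e. a (Inr e) \<le> a (Inl v))}"

definition submonoid :: "'m::comm_monoid_add set \<Rightarrow> bool" where
  "submonoid H \<longleftrightarrow> 0 \<in> H \<and> (\<forall>a\<in>H. \<forall>b\<in>H. a + b \<in> H)"

inductive_set generated_monoid :: "'m::comm_monoid_add set \<Rightarrow> 'm set" for S where
  gen_zero: "0 \<in> generated_monoid S"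
| gen_add: "s \<in> S \<Longrightarrow> x \<in> generated_monoid S \<Longrightarrow> s + x \<in> generated_monoid S"

definition finitely_generated_monoid :: "'m::comm_monoid_add set \<Rightarrow> bool" where
  "finitely_generated_monoid H \<longleftrightarrow> (\<exists>S. finite S \<and> S \<subseteq> H \<and> generated_monoid S = H)"

definition reduced_monoid :: "'m::comm_monoid_add set \<Rightarrow> bool" where
  "reduced_monoid H \<longleftrightarrow> (\<forall>a\<in>H. (\<exists>b\<in>H. a + b = 0) \<longrightarrow> a = 0)"

definition cancellative_monoid :: "'m::comm_monoid_add set \<Rightarrow> bool" where
  "cancellative_monoid H \<longleftrightarrow> (\<forall>a\<in>H. \<forall>b\<in>H. \<forall>c\<in>H. a + b = a + c \<longrightarrow> b = c)"

definition free_monoid :: "'i set \<Rightarrow> ('i \<Rightarrow> nat) set" where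
  "free_monoid I = {f. finite {i. f i \<noteq> 0} \<and> {i. f i \<noteq> 0} \<subseteq> I}"

definition monoid_hom_into :: "'m::comm_monoid_add set \<Rightarrow> 'n::comm_monoid_add set \<Rightarrow> ('m \<Rightarrow> 'n) \<Rightarrow> bool" where
  "monoid_hom_into H D \<phi> \<longleftrightarrow> (\<forall>a\<in>H. \<phi> a \<in> D) \<and> \<phi> 0 = 0 \<and>
      (\<forall>a\<in>H. \<forall>b\<in>H. \<phi> (a + b) = \<phi> a + \<phi> b)"

definition divisor_hom :: "'m::comm_monoid_add set \<Rightarrow> 'n::comm_monoid_add set \<Rightarrow> ('m \<Rightarrow> 'n) \<Rightarrow> bool" where
  "divisor_hom H D \<phi> \<longleftrightarrow> monoid_hom_into H D \<phi> \<and>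
      (\<forall>a\<in>H. \<forall>b\<in>H. (\<exists>z\<in>D. \<phi> b = \<phi> a + z) \<longrightarrow> (\<exists>c\<in>H. b = a + c))"

text \<open>Krull monoid, with the index set I of the free monoid taken inside the type 'i
  (given by the type argument).\<close>

definition krull_monoid :: "'i itself \<Rightarrow> 'm::comm_monoid_add set \<Rightarrow> bool" where
  "krull_monoid (_::'i itself) H \<longleftrightarrow> submonoid H \<and> cancellative_monoid H \<and>
      (\<exists>(I::'i set) \<phi>. divisor_hom H (free_monoid I) \<phi>)"

definition unit_vec :: "'i \<Rightarrow> 'i \<Rightarrow> nat" where
  "unit_vec i = (\<lambda>j. if j = i then 1 else 0)"

definition divisor_theory :: "'m::comm_monoid_add set \<Rightarrow> 'i set \<Rightarrow> ('m \<Rightarrow> 'i \<Rightarrow> nat) \<Rightarrow> bool" where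
  "divisor_theory H I \<phi> \<longleftrightarrow> divisor_hom H (free_monoid I) \<phi> \<and>
      (\<forall>i\<in>I. \<exists>A. finite A \<and> A \<noteq> {} \<and> A \<subseteq> H \<and>
                 (\<lambda>j. Min ((\<lambda>a. \<phi> a j) ` A)) = unit_vec i)"

end

theory Submission
  imports Defs "HOL-Library.Indicator_Function"
begin

text \<open>An agglomeration a is determined by the coordinates a(e) for edges e, a(v) - a(e) for
  incidences v \<in> r e, and a(v) for isolated vertices v; there are 3|E| + \<iota> of them, since every
  edge has two ends. The order they induce is divisibility in A(G), and every unit vector is the
  pointwise minimum of the coordinates of at most two 0-1 agglomerations, so they form a divisor
  theory. Every agglomeration is a sum of 0-1 agglomerations, of which there are finitely many.
  The number of primes does not depend on the divisor theory: by the approximation theorem,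
  whether gcd \<phi>(A) \<le> \<phi>(b) holds is expressible by divisibility in H alone, so any two divisor
  theories order the gcds of finite subsets of H in the same way, and their primes correspond to
  the same minimal nonzero gcds.\<close>

section \<open>Divisor theories\<close>

definition divides_in :: "'m::comm_monoid_add set \<Rightarrow> 'm \<Rightarrow> 'm \<Rightarrow> bool" where
  "divides_in H a b \<longleftrightarrow> (\<exists>c\<in>H. b = a + c)"

definition divisor_gcd :: "('m \<Rightarrow> 'i \<Rightarrow> nat) \<Rightarrow> 'm set \<Rightarrow> 'i \<Rightarrow> nat" where
  "divisor_gcd \<phi> A = (\<lambda>j. Min ((\<lambda>a. \<phi> a j) ` A))"

lemma divisor_theory_iff_divisor_gcd:
  "divisor_theory H I \<phi> \<longleftrightarrow> divisor_hom H (free_monoid I) \<phi> \<and>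
     (\<forall>i\<in>I. \<exists>A. finite A \<and> A \<noteq> {} \<and> A \<subseteq> H \<and> divisor_gcd \<phi> A = unit_vec i)"
  unfolding divisor_theory_def divisor_gcd_def by simp

lemma divisor_gcd_le: "finite A \<Longrightarrow> a \<in> A \<Longrightarrow> divisor_gcd \<phi> A j \<le> \<phi> a j"
  by (simp add: divisor_gcd_def)

lemma divisor_gcd_attained:
  assumes "finite A" "A \<noteq> {}"
  shows "\<exists>a\<in>A. \<phi> a j = divisor_gcd \<phi> A j"
proof -
  have "divisor_gcd \<phi> A j \<in> (\<lambda>a. \<phi> a j) ` A"
    unfolding divisor_gcd_def using assms by simp
  then show ?thesis
    by force
qed

lemma le_divisor_gcd_iff:
  "finite A \<Longrightarrow> A \<noteq> {} \<Longrightarrow> g \<le> divisor_gcd \<phi> A \<longleftrightarrow> (\<forall>a\<in>A. g \<le> \<phi> a)"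
  by (auto simp: divisor_gcd_def le_fun_def)

lemma divisor_gcd_singleton [simp]: "divisor_gcd \<phi> {a} = \<phi> a"
  by (simp add: divisor_gcd_def)

lemma divisor_gcd_pair: "divisor_gcd \<phi> {a, b} = (\<lambda>j. min (\<phi> a j) (\<phi> b j))"
  by (simp add: divisor_gcd_def)

lemma unit_vec_eq_iff [simp]: "unit_vec i = unit_vec j \<longleftrightarrow> i = j"
  by (auto simp: unit_vec_def fun_eq_iff)

lemma unit_vec_neq_zero [simp]: "unit_vec i \<noteq> 0"
  by (auto simp: unit_vec_def fun_eq_iff)

lemma le_unit_vec_iff: "f \<le> unit_vec i \<longleftrightarrow> f = 0 \<or> f = unit_vec i"
proof
  assume le: "f \<le> unit_vec i"
  have off_i: "f j = 0" if "j \<noteq> i" for j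
    using le that by (auto simp: le_fun_def unit_vec_def dest: spec[of _ j])
  have "f i \<le> 1"
    using le by (auto simp: le_fun_def unit_vec_def dest: spec[of _ i])
  show "f = 0 \<or> f = unit_vec i"
  proof (cases "f i = 0")
    case True
    then have "f j = 0" for j
      using off_i by (cases "j = i") auto
    then show ?thesis
      by auto
  next
    case False
    then have "f j = unit_vec i j" for j
      using \<open>f i \<le> 1\<close> off_i by (cases "j = i") (auto simp: unit_vec_def)
    then show ?thesis
      by auto
  qed
qed (auto simp: le_fun_def unit_vec_def)

lemma divisor_hom_free_monoid_iff:
  fixes I :: "'i set"
  shows "divisor_hom H (free_monoid I) \<phi> \<longleftrightarrow> monoid_hom_into H (free_monoid I) \<phi> \<and>
     (\<forall>a\<in>H. \<forall>b\<in>H. \<phi> a \<le> \<phi> b \<longrightarrow> divides_in H a b)"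
proof -
  have summand_iff: "(\<exists>z\<in>free_monoid I. y = x + z) \<longleftrightarrow> x \<le> y"
    if "y \<in> free_monoid I" for x y :: "'i \<Rightarrow> nat"
  proof
    assume "x \<le> y"
    then have "y = x + (y - x)"
      by (auto simp: fun_eq_iff le_fun_def)
    moreover have "y - x \<in> free_monoid I"
      using that unfolding free_monoid_def by (auto elim: finite_subset[rotated])
    ultimately show "\<exists>z\<in>free_monoid I. y = x + z" by blast
  qed (auto simp: le_fun_def)
  show ?thesis
    unfolding divisor_hom_def divides_in_def monoid_hom_into_def
    using summand_iff by blast
qed

locale submonoid_divisor_theory =
  fixes H :: "'m::comm_monoid_add set" and I :: "'i set" and \<phi> :: "'m \<Rightarrow> 'i \<Rightarrow> nat"
  assumes submonoid: "submonoid H"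
    and divisor_theory: "divisor_theory H I \<phi>"
begin

lemma zero_mem: "0 \<in> H" and add_mem: "a \<in> H \<Longrightarrow> b \<in> H \<Longrightarrow> a + b \<in> H"
  using submonoid by (auto simp: submonoid_def)

lemma hom_zero: "\<phi> 0 = 0"
  and hom_add: "a \<in> H \<Longrightarrow> b \<in> H \<Longrightarrow> \<phi> (a + b) = \<phi> a + \<phi> b"
  and hom_free: "a \<in> H \<Longrightarrow> \<phi> a \<in> free_monoid I"
  using divisor_theory by (auto simp: divisor_theory_def divisor_hom_def monoid_hom_into_def)

lemma le_iff_divides: "a \<in> H \<Longrightarrow> b \<in> H \<Longrightarrow> \<phi> a \<le> \<phi> b \<longleftrightarrow> divides_in H a b"
  using divisor_theory hom_add
  by (auto simp: divisor_theory_def divisor_hom_free_monoid_iff divides_in_def le_fun_def)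

lemma divides_sum_iff:
  "c \<in> H \<Longrightarrow> a \<in> H \<Longrightarrow> d \<in> H \<Longrightarrow> divides_in H c (a + d) \<longleftrightarrow> \<phi> c \<le> \<phi> a + \<phi> d"
  using le_iff_divides[of c "a + d"] by (simp add: add_mem hom_add)

lemma hom_outside: "a \<in> H \<Longrightarrow> i \<notin> I \<Longrightarrow> \<phi> a i = 0"
  using hom_free by (force simp: free_monoid_def)

lemma prime_generator:
  assumes "i \<in> I"
  obtains A where "finite A" "A \<noteq> {}" "A \<subseteq> H" "divisor_gcd \<phi> A = unit_vec i"
  using divisor_theory assms by (auto simp: divisor_theory_iff_divisor_gcd)

text \<open>Each step of the induction adds an element of a set with gcd e_q whose value at p
  is minimal, hence equal to the p-th coordinate of e_q.\<close>

lemma approximation: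
  assumes "finite S" "S \<subseteq> I" "\<forall>j. j \<notin> S \<longrightarrow> \<gamma> j = 0"
  shows "\<exists>d\<in>H. \<gamma> \<le> \<phi> d \<and> \<phi> d p = \<gamma> p"
  using assms(3)
proof (induction "sum \<gamma> S" arbitrary: \<gamma>)
  case 0
  then have "\<gamma> = 0"
    using \<open>finite S\<close> by (auto simp: fun_eq_iff)
  then show ?case
    using zero_mem hom_zero by (intro bexI[of _ 0]) auto
next
  case (Suc n)
  then obtain q where q: "q \<in> S" "\<gamma> q > 0"
    by (metis gr0I nat.distinct(1) sum.neutral)
  define \<gamma>' where "\<gamma>' = \<gamma>(q := \<gamma> q - 1)"
  have "sum \<gamma> S = \<gamma> q + sum \<gamma> (S - {q})" "sum \<gamma>' S = \<gamma>' q + sum \<gamma>' (S - {q})"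
    using \<open>finite S\<close> q(1) by (simp_all add: sum.remove)
  then have "n = sum \<gamma>' S"
    using Suc.hyps(2) q(2) by (simp add: \<gamma>'_def)
  moreover have "\<forall>j. j \<notin> S \<longrightarrow> \<gamma>' j = 0"
    using Suc.prems q(1) by (auto simp: \<gamma>'_def)
  ultimately obtain d where d: "d \<in> H" "\<gamma>' \<le> \<phi> d" "\<phi> d p = \<gamma>' p"
    using Suc.hyps(1) by blast
  obtain A where A: "finite A" "A \<noteq> {}" "A \<subseteq> H" "divisor_gcd \<phi> A = unit_vec q"
    using prime_generator q(1) assms(2) by blast
  then obtain x where x: "x \<in> A" "\<phi> x p = unit_vec q p"
    using divisor_gcd_attained[of A \<phi> p] by auto
  have "1 \<le> \<phi> x q"
    using divisor_gcd_le[OF A(1) x(1), of \<phi> q] A(4) by (simp add: unit_vec_def)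
  have "\<gamma> j \<le> \<phi> x j + \<phi> d j" for j
    using d(2) \<open>1 \<le> \<phi> x q\<close>
    by (cases "j = q") (auto simp: le_fun_def \<gamma>'_def dest: spec[of _ j])
  then have "\<gamma> \<le> \<phi> x + \<phi> d"
    by (simp add: le_fun_def)
  moreover have "\<phi> x p + \<phi> d p = \<gamma> p"
    using x(2) d(3) q(2) by (simp add: \<gamma>'_def unit_vec_def)
  moreover have "x + d \<in> H" "\<phi> (x + d) = \<phi> x + \<phi> d"
    using x(1) A(3) d(1) by (auto intro: add_mem hom_add)
  ultimately show ?case
    by (intro bexI[of _ "x + d"]) auto
qed

lemma divisor_gcd_le_imp_divides:
  assumes A: "finite A" "A \<noteq> {}" "A \<subseteq> H" and b: "b \<in> H" and gcd_le: "divisor_gcd \<phi> A \<le> \<phi> b"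
    and c: "c \<in> H" and d: "d \<in> H" and divides: "\<forall>a\<in>A. divides_in H c (a + d)"
  shows "divides_in H c (b + d)"
proof -
  have "\<phi> c j \<le> \<phi> b j + \<phi> d j" for j
  proof -
    obtain a where a: "a \<in> A" "\<phi> a j = divisor_gcd \<phi> A j"
      using divisor_gcd_attained[OF A(1,2), of \<phi> j] by blast
    have "divides_in H c (a + d)"
      using divides a(1) by blast
    then have "\<phi> c \<le> \<phi> a + \<phi> d"
      using a(1) A(3) c d by (simp add: divides_sum_iff subset_iff)
    then have "\<phi> c j \<le> \<phi> a j + \<phi> d j"
      by (simp add: le_fun_def)
    then show ?thesis
      using a(2) le_funD[OF gcd_le, of j] by simp
  qed
  then show ?thesis
    using b c d by (simp add: divides_sum_iff le_fun_def)
qed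

text \<open>Approximation yields d with \<phi> d \<ge> \<phi> a0 - gcd \<phi>(A), with equality at p. Then a0
  divides a + d for every a \<in> A, hence also b + d, and comparing p-th coordinates gives the claim.\<close>

lemma divides_imp_divisor_gcd_le:
  assumes A: "finite A" "A \<noteq> {}" "A \<subseteq> H" and b: "b \<in> H"
    and divides: "\<forall>c\<in>H. \<forall>d\<in>H. (\<forall>a\<in>A. divides_in H c (a + d)) \<longrightarrow> divides_in H c (b + d)"
  shows "divisor_gcd \<phi> A \<le> \<phi> b"
proof (rule le_funI)
  fix p
  obtain a0 where a0: "a0 \<in> A"
    using A(2) by blast
  then have a0H: "a0 \<in> H"
    using A(3) by blast
  have gcd_le_a0: "divisor_gcd \<phi> A j \<le> \<phi> a0 j" for j
    using divisor_gcd_le[OF A(1) a0] .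
  define \<gamma> where "\<gamma> = \<phi> a0 - divisor_gcd \<phi> A"
  have "finite {j. \<phi> a0 j \<noteq> 0}" "{j. \<phi> a0 j \<noteq> 0} \<subseteq> I"
    using hom_free[OF a0H] by (auto simp: free_monoid_def)
  moreover have "\<forall>j. j \<notin> {j. \<phi> a0 j \<noteq> 0} \<longrightarrow> \<gamma> j = 0"
    by (simp add: \<gamma>_def)
  ultimately obtain d where d: "d \<in> H" "\<gamma> \<le> \<phi> d" "\<phi> d p = \<gamma> p"
    using approximation by blast
  have "divides_in H a0 (a + d)" if a: "a \<in> A" for a
  proof -
    have "\<phi> a0 j \<le> \<phi> a j + \<phi> d j" for j
      using divisor_gcd_le[OF A(1) a, of \<phi> j] gcd_le_a0[of j] le_funD[OF d(2), of j]
      by (simp add: \<gamma>_def)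
    then show ?thesis
      using a A(3) a0H d(1) by (auto simp: divides_sum_iff le_fun_def)
  qed
  then have "divides_in H a0 (b + d)"
    using divides a0H d(1) by blast
  then have "\<phi> a0 p \<le> \<phi> b p + \<phi> d p"
    using a0H b d(1) by (auto simp: divides_sum_iff dest: le_funD[of _ _ p])
  then show "divisor_gcd \<phi> A p \<le> \<phi> b p"
    using d(3) gcd_le_a0[of p] by (simp add: \<gamma>_def)
qed

text \<open>The right-hand side refers to H alone, so the order between gcds of finite subsets
  of H is the same for every divisor theory of H.\<close>

lemma divisor_gcd_le_iff_divides:
  assumes "finite A" "A \<noteq> {}" "A \<subseteq> H" "b \<in> H"
  shows "divisor_gcd \<phi> A \<le> \<phi> b \<longleftrightarrow>
    (\<forall>c\<in>H. \<forall>d\<in>H. (\<forall>a\<in>A. divides_in H c (a + d)) \<longrightarrow> divides_in H c (b + d))"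
  using divisor_gcd_le_imp_divides[OF assms] divides_imp_divisor_gcd_le[OF assms] by blast

end

lemma divisor_gcd_le_divisor_gcd_iff:
  assumes "submonoid_divisor_theory H P \<phi>" "submonoid_divisor_theory H Q \<psi>"
    and A: "finite A" "A \<noteq> {}" "A \<subseteq> H" and B: "finite B" "B \<noteq> {}" "B \<subseteq> H"
  shows "divisor_gcd \<phi> A \<le> divisor_gcd \<phi> B \<longleftrightarrow> divisor_gcd \<psi> A \<le> divisor_gcd \<psi> B"
proof -
  interpret \<phi>: submonoid_divisor_theory H P \<phi> by fact
  interpret \<psi>: submonoid_divisor_theory H Q \<psi> by fact
  have "divisor_gcd \<phi> A \<le> divisor_gcd \<phi> B \<longleftrightarrow> (\<forall>b\<in>B. divisor_gcd \<phi> A \<le> \<phi> b)"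
    by (rule le_divisor_gcd_iff[OF B(1,2)])
  also have "\<dots> \<longleftrightarrow> (\<forall>b\<in>B. divisor_gcd \<psi> A \<le> \<psi> b)"
    using \<phi>.divisor_gcd_le_iff_divides[OF A] \<psi>.divisor_gcd_le_iff_divides[OF A] B(3) by blast
  also have "\<dots> \<longleftrightarrow> divisor_gcd \<psi> A \<le> divisor_gcd \<psi> B"
    by (rule le_divisor_gcd_iff[OF B(1,2), symmetric])
  finally show ?thesis .
qed

lemma prime_correspondence:
  assumes \<phi>_dt: "submonoid_divisor_theory H P \<phi>" and \<psi>_dt: "submonoid_divisor_theory H Q \<psi>"
    and p: "p \<in> P"
  shows "\<exists>q\<in>Q. \<forall>B. finite B \<and> B \<noteq> {} \<and> B \<subseteq> H \<and> divisor_gcd \<psi> B = unit_vec q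
                    \<longrightarrow> divisor_gcd \<phi> B = unit_vec p"
proof -
  interpret \<phi>: submonoid_divisor_theory H P \<phi> by fact
  interpret \<psi>: submonoid_divisor_theory H Q \<psi> by fact
  have gcd_zero_iff: "divisor_gcd \<phi> C = 0 \<longleftrightarrow> divisor_gcd \<psi> C = 0"
    if "finite C" "C \<noteq> {}" "C \<subseteq> H" for C
    using divisor_gcd_le_divisor_gcd_iff[OF \<phi>_dt \<psi>_dt that, of "{0}"]
      \<phi>.zero_mem \<phi>.hom_zero \<psi>.hom_zero
    by (simp add: le_fun_def fun_eq_iff)
  obtain A where A: "finite A" "A \<noteq> {}" "A \<subseteq> H" "divisor_gcd \<phi> A = unit_vec p"
    using \<phi>.prime_generator p by blast
  then have "divisor_gcd \<psi> A \<noteq> 0"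
    using gcd_zero_iff[OF A(1-3)] by simp
  then obtain q where q: "divisor_gcd \<psi> A q > 0"
    by (auto simp: fun_eq_iff)
  have "q \<in> Q"
  proof (rule ccontr)
    assume "q \<notin> Q"
    obtain a where "a \<in> A"
      using A(2) by blast
    then show False
      using q divisor_gcd_le[OF A(1), of a \<psi> q] \<psi>.hom_outside[OF _ \<open>q \<notin> Q\<close>] A(3) by auto
  qed
  moreover have "divisor_gcd \<phi> B = unit_vec p"
    if B: "finite B" "B \<noteq> {}" "B \<subseteq> H" "divisor_gcd \<psi> B = unit_vec q" for B
  proof -
    have "divisor_gcd \<psi> B \<le> divisor_gcd \<psi> A"
      using B(4) q by (auto simp: le_fun_def unit_vec_def)
    then have "divisor_gcd \<phi> B \<le> unit_vec p"
      using divisor_gcd_le_divisor_gcd_iff[OF \<phi>_dt \<psi>_dt B(1-3) A(1-3)] A(4) by simp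
    moreover have "divisor_gcd \<phi> B \<noteq> 0"
      using gcd_zero_iff[OF B(1-3)] B(4) by simp
    ultimately show ?thesis
      by (simp add: le_unit_vec_iff)
  qed
  ultimately show ?thesis by blast
qed

lemma divisor_theory_primes_inj:
  assumes \<phi>_dt: "submonoid_divisor_theory H P \<phi>" and \<psi>_dt: "submonoid_divisor_theory H Q \<psi>"
  shows "\<exists>f. inj_on f P \<and> f ` P \<subseteq> Q"
proof -
  interpret \<psi>: submonoid_divisor_theory H Q \<psi> by fact
  have "\<forall>p\<in>P. \<exists>q. q \<in> Q \<and> (\<forall>B. finite B \<and> B \<noteq> {} \<and> B \<subseteq> H \<and>
      divisor_gcd \<psi> B = unit_vec q \<longrightarrow> divisor_gcd \<phi> B = unit_vec p)"
    using prime_correspondence[OF \<phi>_dt \<psi>_dt] by blast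
  then obtain f where f: "\<forall>p\<in>P. f p \<in> Q \<and> (\<forall>B. finite B \<and> B \<noteq> {} \<and> B \<subseteq> H \<and>
      divisor_gcd \<psi> B = unit_vec (f p) \<longrightarrow> divisor_gcd \<phi> B = unit_vec p)"
    by (rule bchoice[THEN exE])
  have "inj_on f P"
  proof (rule inj_onI)
    fix p p' assume p: "p \<in> P" "p' \<in> P" "f p = f p'"
    obtain B where B: "finite B" "B \<noteq> {}" "B \<subseteq> H" "divisor_gcd \<psi> B = unit_vec (f p)"
      using \<psi>.prime_generator f p(1) by blast
    then have "divisor_gcd \<phi> B = unit_vec p" "divisor_gcd \<phi> B = unit_vec p'"
      using f p(1,2) B(4)[unfolded p(3)] by blast+
    then have "unit_vec p = unit_vec p'"
      by simp
    then show "p = p'" by simp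
  qed
  then show ?thesis
    using f by blast
qed

lemma divisor_theory_card_eq:
  assumes "submonoid_divisor_theory H P \<phi>" "submonoid_divisor_theory H Q \<psi>" "finite P"
  shows "finite Q \<and> card Q = card P"
proof -
  obtain f where f: "inj_on f P" "f ` P \<subseteq> Q"
    using divisor_theory_primes_inj[OF assms(1,2)] by blast
  obtain g where g: "inj_on g Q" "g ` Q \<subseteq> P"
    using divisor_theory_primes_inj[OF assms(2,1)] by blast
  have "finite Q"
    using inj_on_finite[OF g \<open>finite P\<close>] .
  then show ?thesis
    using card_inj_on_le[OF f] card_inj_on_le[OF g \<open>finite P\<close>] by simp
qed

definition reindex :: "('j \<Rightarrow> 'i) \<Rightarrow> 'j set \<Rightarrow> ('i \<Rightarrow> nat) \<Rightarrow> 'j \<Rightarrow> nat" where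
  "reindex \<sigma> J f = (\<lambda>j. if j \<in> J then f (\<sigma> j) else 0)"

lemma reindex_free_monoid:
  assumes "f \<in> free_monoid I" "bij_betw \<sigma> J I"
  shows "reindex \<sigma> J f \<in> free_monoid J"
proof -
  have "finite (\<sigma> -` {i. f i \<noteq> 0} \<inter> J)"
    using assms finite_vimage_IntI unfolding free_monoid_def bij_betw_def by blast
  moreover have "{j. reindex \<sigma> J f j \<noteq> 0} = \<sigma> -` {i. f i \<noteq> 0} \<inter> J"
    by (auto simp: reindex_def)
  ultimately show ?thesis
    by (simp add: free_monoid_def)
qed

lemma reindex_add: "reindex \<sigma> J (f + g) = reindex \<sigma> J f + reindex \<sigma> J g"
  and reindex_zero: "reindex \<sigma> J 0 = 0"
  by (auto simp: reindex_def fun_eq_iff)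

lemma reindex_le_iff:
  assumes "f \<in> free_monoid I" "g \<in> free_monoid I" "bij_betw \<sigma> J I"
  shows "reindex \<sigma> J f \<le> reindex \<sigma> J g \<longleftrightarrow> f \<le> g"
proof
  assume le: "reindex \<sigma> J f \<le> reindex \<sigma> J g"
  show "f \<le> g"
  proof (rule le_funI)
    fix i
    show "f i \<le> g i"
    proof (cases "i \<in> I")
      case True
      then obtain j where "j \<in> J" "i = \<sigma> j"
        using assms(3) by (auto simp: bij_betw_def)
      then show ?thesis
        using le_funD[OF le, of j] by (simp add: reindex_def)
    next
      case False
      then show ?thesis
        using assms(1) by (force simp: free_monoid_def)
    qed
  qed
qed (simp add: reindex_def le_fun_def)

lemma reindex_unit_vec:
  assumes "bij_betw \<sigma> J I" "j \<in> J"
  shows "reindex \<sigma> J (unit_vec (\<sigma> j)) = unit_vec j"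
  using assms by (auto simp: reindex_def unit_vec_def fun_eq_iff bij_betw_def inj_on_def)

lemma divisor_gcd_reindex:
  assumes "A \<noteq> {}"
  shows "divisor_gcd (\<lambda>a. reindex \<sigma> J (\<phi> a)) A = reindex \<sigma> J (divisor_gcd \<phi> A)"
  using assms by (auto simp: divisor_gcd_def reindex_def fun_eq_iff image_constant_conv)

lemma divisor_theory_reindex:
  assumes dt: "divisor_theory H I \<phi>" and \<sigma>: "bij_betw \<sigma> J I"
  shows "divisor_theory H J (\<lambda>a. reindex \<sigma> J (\<phi> a))"
proof -
  have hom: "monoid_hom_into H (free_monoid I) \<phi>"
    and le_divides: "\<forall>a\<in>H. \<forall>b\<in>H. \<phi> a \<le> \<phi> b \<longrightarrow> divides_in H a b"
    using dt unfolding divisor_theory_def divisor_hom_free_monoid_iff by blast+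
  have free: "\<phi> a \<in> free_monoid I" if "a \<in> H" for a
    using hom that by (simp add: monoid_hom_into_def)
  have "divisor_hom H (free_monoid J) (\<lambda>a. reindex \<sigma> J (\<phi> a))"
    unfolding divisor_hom_free_monoid_iff monoid_hom_into_def
  proof (intro conjI ballI impI)
    fix a b assume "a \<in> H" "b \<in> H"
    then show "reindex \<sigma> J (\<phi> (a + b)) = reindex \<sigma> J (\<phi> a) + reindex \<sigma> J (\<phi> b)"
      using hom by (simp add: monoid_hom_into_def reindex_add)
    assume "reindex \<sigma> J (\<phi> a) \<le> reindex \<sigma> J (\<phi> b)"
    then show "divides_in H a b"
      using le_divides reindex_le_iff[OF free free \<sigma>] \<open>a \<in> H\<close> \<open>b \<in> H\<close> by blast
  next
    fix a assume "a \<in> H"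
    then show "reindex \<sigma> J (\<phi> a) \<in> free_monoid J"
      using reindex_free_monoid[OF free \<sigma>] by blast
  qed (use hom in \<open>simp add: monoid_hom_into_def reindex_zero\<close>)
  moreover have "\<exists>A. finite A \<and> A \<noteq> {} \<and> A \<subseteq> H \<and> divisor_gcd (\<lambda>a. reindex \<sigma> J (\<phi> a)) A = unit_vec j"
    if "j \<in> J" for j
  proof -
    have "\<sigma> j \<in> I"
      using \<sigma> that by (auto simp: bij_betw_def)
    then obtain A where "finite A" "A \<noteq> {}" "A \<subseteq> H" "divisor_gcd \<phi> A = unit_vec (\<sigma> j)"
      using dt unfolding divisor_theory_iff_divisor_gcd by blast
    then show ?thesis
      using reindex_unit_vec[OF \<sigma> that] divisor_gcd_reindex by metis
  qed
  ultimately show ?thesis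
    unfolding divisor_theory_iff_divisor_gcd by blast
qed

section \<open>Agglomerations\<close>

lemma generated_monoid_subset:
  assumes "submonoid H" "S \<subseteq> H"
  shows "generated_monoid S \<subseteq> H"
proof
  fix x assume "x \<in> generated_monoid S"
  then show "x \<in> H"
    by induction (use assms in \<open>auto simp: submonoid_def\<close>)
qed

lemma cancellative_monoid_cancel: "cancellative_monoid (H :: 'm::cancel_comm_monoid_add set)"
  by (simp add: cancellative_monoid_def)

lemma reduced_monoid_nat_funs: "reduced_monoid (H :: ('a \<Rightarrow> nat) set)"
  by (auto simp: reduced_monoid_def fun_eq_iff)

lemma agglomeration_edge_le:
  "a \<in> agglomerations V E r \<Longrightarrow> e \<in> E \<Longrightarrow> v \<in> r e \<Longrightarrow> a (Inr e) \<le> a (Inl v)"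
  by (simp add: agglomerations_def)

lemma agglomeration_vertex_outside: "a \<in> agglomerations V E r \<Longrightarrow> v \<notin> V \<Longrightarrow> a (Inl v) = 0"
  and agglomeration_edge_outside: "a \<in> agglomerations V E r \<Longrightarrow> e \<notin> E \<Longrightarrow> a (Inr e) = 0"
  by (auto simp: agglomerations_def)

lemma submonoid_agglomerations: "submonoid (agglomerations V E r)"
  by (auto simp: submonoid_def agglomerations_def add_mono)

lemma agglomeration_compose_mono:
  assumes "a \<in> agglomerations V E r" "mono f" "f 0 = 0"
  shows "(\<lambda>x. f (a x)) \<in> agglomerations V E r"
  using assms by (auto simp: agglomerations_def mono_def)

text \<open>Every agglomeration a with values at most M is the sum of the 0-1 agglomeration
  min 1 \<circ> a and of a - 1, whose values are at most M - 1.\<close>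

lemma finitely_generated_agglomerations:
  assumes "finite V" "finite E"
  shows "finitely_generated_monoid (agglomerations V E r)"
proof -
  let ?H = "agglomerations V E r"
  define D where "D = Inl ` V \<union> Inr ` E"
  define S where "S = {a \<in> ?H. \<forall>x. a x \<le> 1}"
  have "S \<subseteq> {f. \<forall>x. (x \<in> D \<longrightarrow> f x \<in> {0, 1}) \<and> (x \<notin> D \<longrightarrow> f x = 0)}"
    by (auto simp: S_def D_def agglomerations_def le_Suc_eq)
  moreover have "finite D"
    using assms by (simp add: D_def)
  ultimately have "finite S"
    by (rule finite_subset[OF _ finite_set_of_finite_funs]) simp
  have "a \<in> generated_monoid S" if "a \<in> ?H" "\<forall>x. a x \<le> M" for a M
    using that
  proof (induction M arbitrary: a)
    case 0
    then have "a = 0"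
      by (simp add: fun_eq_iff)
    then show ?case
      by (simp only: generated_monoid.gen_zero)
  next
    case (Suc M)
    have "mono (min (1::nat))" "mono (\<lambda>n::nat. n - 1)"
      by (auto intro!: monoI min.mono diff_le_mono)
    then have low: "(\<lambda>x. min 1 (a x)) \<in> ?H" and high: "(\<lambda>x. a x - 1) \<in> ?H"
      using agglomeration_compose_mono[OF Suc.prems(1), of "min 1"]
        agglomeration_compose_mono[OF Suc.prems(1), of "\<lambda>n. n - 1"] by simp_all
    from low have "(\<lambda>x. min 1 (a x)) \<in> S"
      by (simp add: S_def)
    moreover from high have "(\<lambda>x. a x - 1) \<in> generated_monoid S"
      using Suc.prems(2) by (intro Suc.IH) (auto simp: le_diff_conv)
    ultimately have "(\<lambda>x. min 1 (a x)) + (\<lambda>x. a x - 1) \<in> generated_monoid S"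
      by (rule generated_monoid.gen_add)
    moreover have "(\<lambda>x. min 1 (a x)) + (\<lambda>x. a x - 1) = a"
      by (auto simp: fun_eq_iff min_def)
    ultimately show ?case
      by simp
  qed
  moreover have "a x \<le> sum a D" if "a \<in> ?H" for a x
    using that \<open>finite D\<close> by (cases "x \<in> D") (auto simp: D_def agglomerations_def member_le_sum)
  ultimately have "?H \<subseteq> generated_monoid S"
    by blast
  moreover have "generated_monoid S \<subseteq> ?H"
    by (rule generated_monoid_subset[OF submonoid_agglomerations]) (auto simp: S_def)
  ultimately show ?thesis
    unfolding finitely_generated_monoid_def using \<open>finite S\<close> by (auto simp: S_def)
qed

datatype ('v, 'e) agg_prime = Edge_prime 'e | Incidence_prime 'e 'v | Isolated_prime 'v

definition agg_primes :: "'v set \<Rightarrow> 'e set \<Rightarrow> ('e \<Rightarrow> 'v set) \<Rightarrow> ('v, 'e) agg_prime set" where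
  "agg_primes V E r = Edge_prime ` E \<union> (\<lambda>(e, v). Incidence_prime e v) ` Sigma E r
     \<union> Isolated_prime ` isolated_vertices V E r"

fun agg_divisor :: "'v set \<Rightarrow> 'e set \<Rightarrow> ('e \<Rightarrow> 'v set) \<Rightarrow> ('v + 'e \<Rightarrow> nat) \<Rightarrow> ('v, 'e) agg_prime \<Rightarrow> nat"
  where
    "agg_divisor V E r a (Edge_prime e) = (if e \<in> E then a (Inr e) else 0)"
  | "agg_divisor V E r a (Incidence_prime e v) = (if e \<in> E \<and> v \<in> r e then a (Inl v) - a (Inr e) else 0)"
  | "agg_divisor V E r a (Isolated_prime v) = (if v \<in> isolated_vertices V E r then a (Inl v) else 0)"

lemma agg_primes_simps [simp]:
  "Edge_prime e \<in> agg_primes V E r \<longleftrightarrow> e \<in> E"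
  "Incidence_prime e v \<in> agg_primes V E r \<longleftrightarrow> e \<in> E \<and> v \<in> r e"
  "Isolated_prime v \<in> agg_primes V E r \<longleftrightarrow> v \<in> isolated_vertices V E r"
  by (auto simp: agg_primes_def)

lemma isolated_vertices_iff: "v \<in> isolated_vertices V E r \<longleftrightarrow> v \<in> V \<and> (\<forall>e\<in>E. v \<notin> r e)"
  by (simp add: isolated_vertices_def)

lemma card_agg_primes:
  fixes V :: "'v set" and E :: "'e set" and r :: "'e \<Rightarrow> 'v set"
  assumes "is_graph V E r"
  shows "finite (agg_primes V E r) \<and> card (agg_primes V E r) = 3 * card E + card (isolated_vertices V E r)"
proof -
  let ?edges = "Edge_prime ` E :: ('v, 'e) agg_prime set"
  let ?incidences = "(\<lambda>(e, v). Incidence_prime e v) ` Sigma E r :: ('v, 'e) agg_prime set"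
  let ?isolated = "Isolated_prime ` isolated_vertices V E r :: ('v, 'e) agg_prime set"
  have fin: "finite V" "finite E" and edge: "\<And>e. e \<in> E \<Longrightarrow> finite (r e) \<and> card (r e) = 2"
    using assms unfolding is_graph_def by (auto intro: card_ge_0_finite)
  have "finite (Sigma E r)" "card (Sigma E r) = 2 * card E"
    using fin edge by (auto simp: card_SigmaI)
  moreover have "finite (isolated_vertices V E r)"
    using fin by (simp add: isolated_vertices_def)
  ultimately have finite: "finite ?edges" "finite ?incidences" "finite ?isolated"
    using fin by simp_all
  have "card (agg_primes V E r) = card (?edges \<union> ?incidences) + card ?isolated"
    unfolding agg_primes_def using finite by (intro card_Un_disjoint) auto
  also have "card (?edges \<union> ?incidences) = card ?edges + card ?incidences"
    using finite by (intro card_Un_disjoint) auto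
  finally have "card (agg_primes V E r) = card ?edges + card ?incidences + card ?isolated" .
  moreover have "card ?edges = card E" "card ?isolated = card (isolated_vertices V E r)"
    by (simp_all add: card_image inj_on_def)
  moreover have "card ?incidences = card (Sigma E r)"
    by (rule card_image) (auto simp: inj_on_def)
  ultimately show ?thesis
    using \<open>card (Sigma E r) = 2 * card E\<close> finite by (simp add: agg_primes_def)
qed

lemma agg_divisor_add:
  assumes "a \<in> agglomerations V E r" "b \<in> agglomerations V E r"
  shows "agg_divisor V E r (a + b) = agg_divisor V E r a + agg_divisor V E r b"
proof
  fix p
  show "agg_divisor V E r (a + b) p = (agg_divisor V E r a + agg_divisor V E r b) p"
  proof (cases p)
    case (Incidence_prime e v)
    then show ?thesis
      using agglomeration_edge_le[OF assms(1), of e v] agglomeration_edge_le[OF assms(2), of e v]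
      by auto
  qed auto
qed

lemma agg_divisor_free:
  assumes "is_graph V E r"
  shows "agg_divisor V E r a \<in> free_monoid (agg_primes V E r)"
proof -
  have "{p. agg_divisor V E r a p \<noteq> 0} \<subseteq> agg_primes V E r"
  proof
    fix p assume "p \<in> {p. agg_divisor V E r a p \<noteq> 0}"
    then show "p \<in> agg_primes V E r"
      by (cases p) (auto split: if_splits)
  qed
  then show ?thesis
    using card_agg_primes[OF assms] by (auto simp: free_monoid_def intro: finite_subset)
qed

lemma agg_divisor_le_imp_le:
  assumes a: "a \<in> agglomerations V E r" and b: "b \<in> agglomerations V E r"
    and le: "agg_divisor V E r a \<le> agg_divisor V E r b"
  shows "a \<le> b"
proof (rule le_funI)
  fix x
  have le_at: "agg_divisor V E r a p \<le> agg_divisor V E r b p" for p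
    using le by (simp add: le_fun_def)
  show "a x \<le> b x"
  proof (cases x)
    case (Inr e)
    then show ?thesis
      using le_at[of "Edge_prime e"] agglomeration_edge_outside[OF a, of e] by (cases "e \<in> E") auto
  next
    case (Inl v)
    consider (outside) "v \<notin> V" | (isolated) "v \<in> isolated_vertices V E r"
      | (incident) e where "e \<in> E" "v \<in> r e"
      by (auto simp: isolated_vertices_iff)
    then show ?thesis
    proof cases
      case outside
      then show ?thesis
        using Inl agglomeration_vertex_outside[OF a] by auto
    next
      case isolated
      then show ?thesis
        using Inl le_at[of "Isolated_prime v"] by simp
    next
      case incident
      then have "a (Inr e) \<le> a (Inl v)" "b (Inr e) \<le> b (Inl v)"
        using a b by (simp_all add: agglomeration_edge_le)
      moreover have "a (Inr e) \<le> b (Inr e)" "a (Inl v) - a (Inr e) \<le> b (Inl v) - b (Inr e)"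
        using incident le_at[of "Edge_prime e"] le_at[of "Incidence_prime e v"] by simp_all
      ultimately show ?thesis
        using Inl by simp
    qed
  qed
qed

lemma agg_divisor_le_imp_divides:
  assumes a: "a \<in> agglomerations V E r" and b: "b \<in> agglomerations V E r"
    and le: "agg_divisor V E r a \<le> agg_divisor V E r b"
  shows "divides_in (agglomerations V E r) a b"
proof -
  have "a \<le> b"
    using agg_divisor_le_imp_le[OF assms] .
  have "b - a \<in> agglomerations V E r"
    unfolding agglomerations_def mem_Collect_eq
  proof (intro conjI allI impI ballI)
    fix x assume "x \<notin> Inl ` V \<union> Inr ` E"
    then show "(b - a) x = 0"
      using b by (simp add: agglomerations_def)
  next
    fix e v assume e: "e \<in> E" "v \<in> r e"
    then have "a (Inr e) \<le> a (Inl v)" "b (Inr e) \<le> b (Inl v)"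
      using a b by (simp_all add: agglomeration_edge_le)
    moreover have "a (Inl v) - a (Inr e) \<le> b (Inl v) - b (Inr e)"
      using e le by (auto simp: le_fun_def dest: spec[of _ "Incidence_prime e v"])
    moreover have "a (Inr e) \<le> b (Inr e)"
      using \<open>a \<le> b\<close> by (simp add: le_fun_def)
    ultimately show "(b - a) (Inr e) \<le> (b - a) (Inl v)"
      by simp
  qed
  moreover have "b = a + (b - a)"
    using \<open>a \<le> b\<close> by (auto simp: fun_eq_iff le_fun_def)
  ultimately show ?thesis
    unfolding divides_in_def by blast
qed

lemma indicator_agglomeration:
  assumes "S \<subseteq> Inl ` V \<union> Inr ` E" "\<And>e v. e \<in> E \<Longrightarrow> v \<in> r e \<Longrightarrow> Inr e \<in> S \<Longrightarrow> Inl v \<in> S"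
  shows "(indicator S :: 'v + 'e \<Rightarrow> nat) \<in> agglomerations V E r"
  using assms by (auto simp: agglomerations_def indicator_def)

lemma agg_prime_generator:
  assumes graph: "is_graph V E r" and p: "p \<in> agg_primes V E r"
  shows "\<exists>A. finite A \<and> A \<noteq> {} \<and> A \<subseteq> agglomerations V E r \<and>
           divisor_gcd (agg_divisor V E r) A = unit_vec p"
proof -
  let ?H = "agglomerations V E r" and ?\<phi> = "agg_divisor V E r"
  have edges: "\<And>e. e \<in> E \<Longrightarrow> r e \<subseteq> V"
    using graph by (simp add: is_graph_def)
  have pair: "\<exists>A. finite A \<and> A \<noteq> {} \<and> A \<subseteq> ?H \<and> divisor_gcd ?\<phi> A = unit_vec p"
    if "a \<in> ?H" "b \<in> ?H" "\<And>q. min (?\<phi> a q) (?\<phi> b q) = unit_vec p q" for a b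
    using that by (intro exI[of _ "{a, b}"]) (auto simp: divisor_gcd_pair)
  show ?thesis
  proof (cases p)
    case (Edge_prime e)
    then have e: "e \<in> E"
      using p by simp
    show ?thesis
    proof (rule pair)
      show "indicator ({Inr e} \<union> Inl ` r e) \<in> ?H" "indicator (Inl ` V \<union> Inr ` E) \<in> ?H"
        using e edges by (auto intro!: indicator_agglomeration)
      show "min (?\<phi> (indicator ({Inr e} \<union> Inl ` r e)) q) (?\<phi> (indicator (Inl ` V \<union> Inr ` E)) q)
          = unit_vec p q" for q
        using Edge_prime e edges
        by (cases q) (simp_all add: indicator_def unit_vec_def isolated_vertices_iff image_iff)
    qed
  next
    case (Incidence_prime e v)
    then have e: "e \<in> E" "v \<in> r e"
      using p by simp_all
    show ?thesis
    proof (rule pair)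
      show "indicator {Inl v} \<in> ?H" "indicator (Inl ` V \<union> Inr ` (E - {e})) \<in> ?H"
        using e edges by (auto intro!: indicator_agglomeration)
      show "min (?\<phi> (indicator {Inl v}) q) (?\<phi> (indicator (Inl ` V \<union> Inr ` (E - {e}))) q)
          = unit_vec p q" for q
        using Incidence_prime e edges[OF e(1)]
        by (cases q) (simp_all add: indicator_def unit_vec_def isolated_vertices_iff image_iff subset_iff, blast)
    qed
  next
    case (Isolated_prime v)
    then have v: "v \<in> V" "\<forall>e\<in>E. v \<notin> r e"
      using p by (simp_all add: isolated_vertices_iff)
    have "indicator {Inl v} \<in> ?H"
      using v by (auto intro!: indicator_agglomeration)
    moreover have "?\<phi> (indicator {Inl v}) q = unit_vec p q" for q
      using Isolated_prime v by (cases q) (simp_all add: indicator_def unit_vec_def isolated_vertices_iff, blast)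
    ultimately show ?thesis
      by (intro exI[of _ "{indicator {Inl v}}"]) (auto simp: fun_eq_iff)
  qed
qed

theorem divisor_theory_agg_divisor:
  assumes "is_graph V E r"
  shows "divisor_theory (agglomerations V E r) (agg_primes V E r) (agg_divisor V E r)"
proof -
  have "monoid_hom_into (agglomerations V E r) (free_monoid (agg_primes V E r)) (agg_divisor V E r)"
    unfolding monoid_hom_into_def
  proof (intro conjI ballI)
    show "agg_divisor V E r 0 = 0"
    proof
      fix p show "agg_divisor V E r 0 p = 0 p"
        by (cases p) auto
    qed
  qed (simp_all add: agg_divisor_free[OF assms] agg_divisor_add)
  then have "divisor_hom (agglomerations V E r) (free_monoid (agg_primes V E r)) (agg_divisor V E r)"
    by (simp add: divisor_hom_free_monoid_iff agg_divisor_le_imp_divides)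
  then show ?thesis
    using agg_prime_generator[OF assms] by (simp add: divisor_theory_iff_divisor_gcd)
qed

theorem theorem4p6:
  fixes V :: "'v set" and E :: "'e set" and r :: "'e \<Rightarrow> 'v set"
  assumes "is_graph V E r"
  shows "finitely_generated_monoid (agglomerations V E r)
       \<and> reduced_monoid (agglomerations V E r)
       \<and> krull_monoid TYPE(nat) (agglomerations V E r)
       \<and> (\<exists>(I::nat set) \<phi>. divisor_theory (agglomerations V E r) I \<phi>
             \<and> finite I \<and> card I = 3 * card E + card (isolated_vertices V E r))
       \<and> (\<forall>(I::'i set) \<phi>. divisor_theory (agglomerations V E r) I \<phi> \<longrightarrow>
             finite I \<and> card I = 3 * card E + card (isolated_vertices V E r))"
proof -
  let ?H = "agglomerations V E r" and ?N = "3 * card E + card (isolated_vertices V E r)"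
  have dt: "submonoid_divisor_theory ?H (agg_primes V E r) (agg_divisor V E r)"
    using divisor_theory_agg_divisor[OF assms] submonoid_agglomerations
    by (simp add: submonoid_divisor_theory_def)
  have primes: "finite (agg_primes V E r)" "card (agg_primes V E r) = ?N"
    using card_agg_primes[OF assms] by simp_all
  then obtain \<sigma> where "bij_betw \<sigma> {0..<?N} (agg_primes V E r)"
    by (metis ex_bij_betw_nat_finite)
  then have nat_dt: "divisor_theory ?H {0..<?N} (\<lambda>a. reindex \<sigma> {0..<?N} (agg_divisor V E r a))"
    by (rule divisor_theory_reindex[OF divisor_theory_agg_divisor[OF assms]])
  have "krull_monoid TYPE(nat) ?H"
    using submonoid_agglomerations cancellative_monoid_cancel nat_dt
    unfolding krull_monoid_def divisor_theory_def by blast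
  moreover have "finite I \<and> card I = ?N" if "divisor_theory ?H (I::'i set) \<phi>" for I \<phi>
  proof -
    have "submonoid_divisor_theory ?H I \<phi>"
      using that submonoid_agglomerations by (simp add: submonoid_divisor_theory_def)
    then show ?thesis
      using divisor_theory_card_eq[OF dt _ primes(1)] primes(2) by simp
  qed
  ultimately show ?thesis
    using finitely_generated_agglomerations assms reduced_monoid_nat_funs nat_dt
    by (auto simp: is_graph_def)
qed

end
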